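(* Let $(\mathbf{H},m,\Delta)$ be a self-adjoint poset Hopf monoid. For each finite set $I$ let $\mathbf{d}[I]$ be the subspace of $\mathbf{k}\mathbf{H}[I]$ spanned by the products $m_{S,T}(y,z)$ with $I=S\sqcup T$, $S,T$ nonempty, $y\in\mathbf{H}[S]$, $z\in\mathbf{H}[T]$, and let $\mathbf{p}[I]$ be the subspace of primitive elements of $\mathbf{k}\mathbf{H}[I]$. Then $\mathbf{k}\mathbf{H}[I]=\mathbf{p}[I]\oplus\mathbf{d}[I]$ for every finite set $I$.
   Context: $\mathbf{k}$ is a field of characteristic $0$. A (connected) poset species $\mathbf{H}$ assigns to each finite set $I$ a locally finite poset $\mathbf{H}[I]$, $\mathbf{H}[\emptyset]=\{1\}$, and to each bijection an order-preserving bijection, functorially. A poset Hopf monoid $(\mathbf{H},m,\Delta)$ consists of order-preserving maps $m_{S,T}:\mathbf{H}[S]\times\mathbf{H}[T]\to\mathbf{H}[S\sqcup T]$ (natural, associative, unital) and $\Delta_{S,T}:\mathbf{H}[S\sqcup T]\to\mathbf{H}[S]\times\mathbf{H}[T]$ (natural, coassociative, counital), satisfying compatibility: for $I=S_1\sqcup S_2=T_1\sqcup T_2$, $A=S_1\cap T_1$, $B=S_1\cap T_2$, $C=S_2\cap T_1$, $D=S_2\cap T_2$, if $\Delta_{A,B}(x)=(x_A,x_B)$, $\Delta_{C,D}(y)=(y_C,y_D)$ then $\Delta_{T_1,T_2}(m_{S_1,S_2}(x,y))=(m_{A,C}(x_A,y_C),m_{B,D}(x_B,y_D))$. It is self-adjoint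 if $m_{S,T}$ and $\Delta_{S,T}$ form a Galois connection for all $S,T$ (i.e. $(\mathbf{H},\Delta)$ and $(\mathbf{H},m)$ form an adjoint pair: either $\Delta_{S,T}(x)\le(y,z)\iff x\le m_{S,T}(y,z)$ for all $x,y,z$, or $m_{S,T}(y,z)\le x\iff(y,z)\le\Delta_{S,T}(x)$ for all $x,y,z$). $\mathbf{k}\mathbf{H}[I]$ is the vector space with basis $\mathbf{H}[I]$, operations extended linearly. An element $p\in\mathbf{k}\mathbf{H}[I]$ is primitive if $\Delta_{S,T}(p)=0$ for all $I=S\sqcup T$ with $S,T$ nonempty. *)

theory Defs
  imports Main
begin

text \<open>
A poset species over ground type 'e with points of type 'h:
  car I     : the underlying set of the poset H[I]   (I a finite subset of 'e)
  le I      : the partial order of H[I]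
  rel s I   : the map H[s] : H[I] -> H[s ` I] for s injective on I
Operations: mul S T = m_{S,T}, cop S T = Delta_{S,T}; one = the unique element of H[{}].
\<close>

definition locally_finite_poset :: "'h set \<Rightarrow> ('h \<Rightarrow> 'h \<Rightarrow> bool) \<Rightarrow> bool" where
  "locally_finite_poset A r \<longleftrightarrow>
     (\<forall>x\<in>A. r x x) \<and>
     (\<forall>x\<in>A. \<forall>y\<in>A. r x y \<and> r y x \<longrightarrow> x = y) \<and>
     (\<forall>x\<in>A. \<forall>y\<in>A. \<forall>z\<in>A. r x y \<and> r y z \<longrightarrow> r x z) \<and>
     (\<forall>x\<in>A. \<forall>y\<in>A. finite {w\<in>A. r x w \<and> r w y})"

definition poset_species ::
  "('e set \<Rightarrow> 'h set) \<Rightarrow> ('e set \<Rightarrow> 'h \<Rightarrow> 'h \<Rightarrow> bool) \<Rightarrow> (('e \<Rightarrow> 'e) \<Rightarrow> 'e set \<Rightarrow> 'h \<Rightarrow> 'h)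
    \<Rightarrow> 'h \<Rightarrow> bool" where
  "poset_species car le rel one \<longleftrightarrow>
     car {} = {one} \<and>
     (\<forall>I. finite I \<longrightarrow> locally_finite_poset (car I) (le I)) \<and>
     (\<forall>I s. finite I \<and> inj_on s I \<longrightarrow>
        bij_betw (rel s I) (car I) (car (s ` I)) \<and>
        (\<forall>x\<in>car I. \<forall>y\<in>car I. le I x y \<longrightarrow> le (s ` I) (rel s I x) (rel s I y))) \<and>
     (\<forall>I s t. finite I \<and> (\<forall>i\<in>I. s i = t i) \<longrightarrow> (\<forall>x\<in>car I. rel s I x = rel t I x)) \<and>
     (\<forall>I. finite I \<longrightarrow> (\<forall>x\<in>car I. rel id I x = x)) \<and>
     (\<forall>I s t. finite I \<and> inj_on s I \<and> inj_on t (s ` I) \<longrightarrow>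
        (\<forall>x\<in>car I. rel (t \<circ> s) I x = rel t (s ` I) (rel s I x)))"

definition prod_le :: "('e set \<Rightarrow> 'h \<Rightarrow> 'h \<Rightarrow> bool) \<Rightarrow> 'e set \<Rightarrow> 'e set \<Rightarrow> 'h \<times> 'h \<Rightarrow> 'h \<times> 'h \<Rightarrow> bool" where
  "prod_le le S T p q \<longleftrightarrow> le S (fst p) (fst q) \<and> le T (snd p) (snd q)"

definition poset_hopf_monoid ::
  "('e set \<Rightarrow> 'h set) \<Rightarrow> ('e set \<Rightarrow> 'h \<Rightarrow> 'h \<Rightarrow> bool) \<Rightarrow> (('e \<Rightarrow> 'e) \<Rightarrow> 'e set \<Rightarrow> 'h \<Rightarrow> 'h)
    \<Rightarrow> 'h \<Rightarrow> ('e set \<Rightarrow> 'e set \<Rightarrow> 'h \<Rightarrow> 'h \<Rightarrow> 'h) \<Rightarrow> ('e set \<Rightarrow> 'e set \<Rightarrow> 'h \<Rightarrow> 'h \<times> 'h) \<Rightarrow> bool" where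
  "poset_hopf_monoid car le rel one mul cop \<longleftrightarrow>
     poset_species car le rel one \<and>
     \<comment> \<open>m: well-defined, order preserving\<close>
     (\<forall>S T. finite S \<and> finite T \<and> S \<inter> T = {} \<longrightarrow>
        (\<forall>y\<in>car S. \<forall>z\<in>car T. mul S T y z \<in> car (S \<union> T)) \<and>
        (\<forall>y\<in>car S. \<forall>z\<in>car T. \<forall>y'\<in>car S. \<forall>z'\<in>car T.
            le S y y' \<and> le T z z' \<longrightarrow> le (S \<union> T) (mul S T y z) (mul S T y' z'))) \<and>
     \<comment> \<open>Delta: well-defined, order preserving\<close>
     (\<forall>S T. finite S \<and> finite T \<and> S \<inter> T = {} \<longrightarrow>
        (\<forall>x\<in>car (S \<union> T). cop S T x \<in> car S \<times> car T) \<and>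
        (\<forall>x\<in>car (S \<union> T). \<forall>x'\<in>car (S \<union> T).
            le (S \<union> T) x x' \<longrightarrow> prod_le le S T (cop S T x) (cop S T x'))) \<and>
     \<comment> \<open>naturality\<close>
     (\<forall>S T s. finite S \<and> finite T \<and> S \<inter> T = {} \<and> inj_on s (S \<union> T) \<longrightarrow>
        (\<forall>y\<in>car S. \<forall>z\<in>car T.
           rel s (S \<union> T) (mul S T y z) = mul (s ` S) (s ` T) (rel s S y) (rel s T z)) \<and>
        (\<forall>x\<in>car (S \<union> T).
           cop (s ` S) (s ` T) (rel s (S \<union> T) x)
             = (rel s S (fst (cop S T x)), rel s T (snd (cop S T x))))) \<and>
     \<comment> \<open>associativity\<close>
     (\<forall>R S T. finite R \<and> finite S \<and> finite T \<and> R \<inter> S = {} \<and> R \<inter> T = {} \<and> S \<inter> T = {} \<longrightarrow>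
        (\<forall>x\<in>car R. \<forall>y\<in>car S. \<forall>z\<in>car T.
           mul (R \<union> S) T (mul R S x y) z = mul R (S \<union> T) x (mul S T y z))) \<and>
     \<comment> \<open>unitality\<close>
     (\<forall>S. finite S \<longrightarrow> (\<forall>x\<in>car S. mul {} S one x = x \<and> mul S {} x one = x)) \<and>
     \<comment> \<open>coassociativity\<close>
     (\<forall>R S T. finite R \<and> finite S \<and> finite T \<and> R \<inter> S = {} \<and> R \<inter> T = {} \<and> S \<inter> T = {} \<longrightarrow>
        (\<forall>x\<in>car (R \<union> S \<union> T).
           (cop R S (fst (cop (R \<union> S) T x)), snd (cop (R \<union> S) T x))
           = ((fst (cop R (S \<union> T) x), fst (cop S T (snd (cop R (S \<union> T) x)))),
              snd (cop S T (snd (cop R (S \<union> T) x)))))) \<and>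
     \<comment> \<open>counitality\<close>
     (\<forall>S. finite S \<longrightarrow> (\<forall>x\<in>car S. cop {} S x = (one, x) \<and> cop S {} x = (x, one))) \<and>
     \<comment> \<open>compatibility\<close>
     (\<forall>S1 S2 T1 T2. finite S1 \<and> finite S2 \<and> finite T1 \<and> finite T2 \<and>
        S1 \<inter> S2 = {} \<and> T1 \<inter> T2 = {} \<and> S1 \<union> S2 = T1 \<union> T2 \<longrightarrow>
        (\<forall>x\<in>car S1. \<forall>y\<in>car S2.
           cop T1 T2 (mul S1 S2 x y)
           = (mul (S1 \<inter> T1) (S2 \<inter> T1) (fst (cop (S1 \<inter> T1) (S1 \<inter> T2) x))
                                         (fst (cop (S2 \<inter> T1) (S2 \<inter> T2) y)),
              mul (S1 \<inter> T2) (S2 \<inter> T2) (snd (cop (S1 \<inter> T1) (S1 \<inter> T2) x))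
                                         (snd (cop (S2 \<inter> T1) (S2 \<inter> T2) y)))))"

text \<open>Self-adjoint: m and Delta form a Galois connection (in one of the two directions, uniformly).\<close>
definition self_adjoint ::
  "('e set \<Rightarrow> 'h set) \<Rightarrow> ('e set \<Rightarrow> 'h \<Rightarrow> 'h \<Rightarrow> bool)
    \<Rightarrow> ('e set \<Rightarrow> 'e set \<Rightarrow> 'h \<Rightarrow> 'h \<Rightarrow> 'h) \<Rightarrow> ('e set \<Rightarrow> 'e set \<Rightarrow> 'h \<Rightarrow> 'h \<times> 'h) \<Rightarrow> bool" where
  "self_adjoint car le mul cop \<longleftrightarrow>
     (\<forall>S T. finite S \<and> finite T \<and> S \<inter> T = {} \<longrightarrow>
        (\<forall>x\<in>car (S \<union> T). \<forall>y\<in>car S. \<forall>z\<in>car T.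
           prod_le le S T (cop S T x) (y, z) \<longleftrightarrow> le (S \<union> T) x (mul S T y z))) \<or>
     (\<forall>S T. finite S \<and> finite T \<and> S \<inter> T = {} \<longrightarrow>
        (\<forall>x\<in>car (S \<union> T). \<forall>y\<in>car S. \<forall>z\<in>car T.
           le (S \<union> T) (mul S T y z) x \<longleftrightarrow> prod_le le S T (y, z) (cop S T x)))"

text \<open>The vector space kH[I]: finitely supported functions car I -> k.\<close>
definition kspace :: "('e set \<Rightarrow> 'h set) \<Rightarrow> 'e set \<Rightarrow> ('h \<Rightarrow> 'k::zero) set" where
  "kspace car I = {f. finite {x. f x \<noteq> 0} \<and> {x. f x \<noteq> 0} \<subseteq> car I}"

definition bvec :: "'h \<Rightarrow> 'h \<Rightarrow> 'k::{zero,one}" where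
  "bvec x = (\<lambda>w. if w = x then 1 else 0)"

text \<open>Linear extension of Delta_{S,T}: kH[S \<union> T] -> k(H[S] x H[T]) = kH[S] \<otimes> kH[T].\<close>
definition cop_lin :: "('e set \<Rightarrow> 'e set \<Rightarrow> 'h \<Rightarrow> 'h \<times> 'h) \<Rightarrow> 'e set \<Rightarrow> 'e set
    \<Rightarrow> ('h \<Rightarrow> 'k::comm_monoid_add) \<Rightarrow> ('h \<times> 'h \<Rightarrow> 'k)" where
  "cop_lin cop S T f = (\<lambda>p. \<Sum>x\<in>{x. f x \<noteq> 0 \<and> cop S T x = p}. f x)"

definition prim :: "('e set \<Rightarrow> 'h set) \<Rightarrow> ('e set \<Rightarrow> 'e set \<Rightarrow> 'h \<Rightarrow> 'h \<times> 'h) \<Rightarrow> 'e set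
    \<Rightarrow> ('h \<Rightarrow> 'k::comm_monoid_add) set" where
  "prim car cop I = {f \<in> kspace car I.
     \<forall>S T. S \<union> T = I \<and> S \<inter> T = {} \<and> S \<noteq> {} \<and> T \<noteq> {} \<longrightarrow> cop_lin cop S T f = (\<lambda>_. 0)}"

definition decomp :: "('e set \<Rightarrow> 'h set) \<Rightarrow> ('e set \<Rightarrow> 'e set \<Rightarrow> 'h \<Rightarrow> 'h \<Rightarrow> 'h) \<Rightarrow> 'e set
    \<Rightarrow> ('h \<Rightarrow> 'k::comm_ring_1) set" where
  "decomp car mul I = {f. \<exists>A c. finite A \<and>
     A \<subseteq> {mul S T y z | S T y z. S \<union> T = I \<and> S \<inter> T = {} \<and> S \<noteq> {} \<and> T \<noteq> {} \<and>
                                  y \<in> car S \<and> z \<in> car T} \<and>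
     f = (\<lambda>w. \<Sum>a\<in>A. c a * bvec a w)}"

end

theory Submission
  imports Defs
begin

text \<open>
  Given \<open>f\<close>, take a finite set \<open>G\<close> of points of \<open>H[I]\<close> containing its support and closed
  under all \<open>m\<^sub>S\<^sub>,\<^sub>T \<circ> \<Delta>\<^sub>S\<^sub>,\<^sub>T\<close>, and let \<open>E\<close> be its decomposable points. The zeta matrix of a finite
  poset is unitriangular, so there is \<open>q\<close> supported on \<open>E\<close> whose lower sums over \<open>E\<close> agree with
  those of \<open>f\<close> over \<open>G\<close>; hence \<open>p = f - q\<close> has vanishing lower sums at every point of \<open>E\<close>. By the
  Galois connection \<open>\<Delta>\<^sub>S\<^sub>,\<^sub>T x \<le> (y, z) \<longleftrightarrow> x \<le> m\<^sub>S\<^sub>,\<^sub>T (y, z)\<close>, the lower sums of \<open>\<Delta>\<^sub>S\<^sub>,\<^sub>T p\<close> in the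
  product order are lower sums of \<open>p\<close> at points \<open>m\<^sub>S\<^sub>,\<^sub>T (\<Delta>\<^sub>S\<^sub>,\<^sub>T u) \<in> E\<close>, so they vanish and
  unitriangularity gives \<open>\<Delta>\<^sub>S\<^sub>,\<^sub>T p = 0\<close>.

  For uniqueness, let \<open>u = m\<^sub>S\<^sub>,\<^sub>T (y, z)\<close> be minimal in the support of a nonzero primitive
  decomposable element. Every point of the support with the same coproduct as \<open>u\<close> lies below
  \<open>u\<close> by the Galois connection, so \<open>u\<close> is the only one, and \<open>\<Delta>\<^sub>S\<^sub>,\<^sub>T\<close> of the element is nonzero at
  \<open>\<Delta>\<^sub>S\<^sub>,\<^sub>T u\<close>. The other form of self-adjointness is the same condition for the opposite orders.
\<close>

locale poset_on =
  fixes A :: "'a set" and le :: "'a \<Rightarrow> 'a \<Rightarrow> bool" (infix \<open>\<sqsubseteq>\<close> 50)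
  assumes refl: "a \<in> A \<Longrightarrow> a \<sqsubseteq> a"
    and antisym: "a \<in> A \<Longrightarrow> b \<in> A \<Longrightarrow> a \<sqsubseteq> b \<Longrightarrow> b \<sqsubseteq> a \<Longrightarrow> a = b"
    and trans: "a \<in> A \<Longrightarrow> b \<in> A \<Longrightarrow> c \<in> A \<Longrightarrow> a \<sqsubseteq> b \<Longrightarrow> b \<sqsubseteq> c \<Longrightarrow> a \<sqsubseteq> c"

definition zeta :: "('a \<Rightarrow> 'a \<Rightarrow> bool) \<Rightarrow> 'a set \<Rightarrow> ('a \<Rightarrow> 'k::comm_monoid_add) \<Rightarrow> 'a \<Rightarrow> 'k" where
  "zeta le B q w = (\<Sum>e\<in>{e\<in>B. le e w}. q e)"

lemma poset_on_dual: "poset_on A le \<Longrightarrow> poset_on A (\<lambda>a b. le b a)"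
  unfolding poset_on_def by blast

lemma poset_on_prod_le:
  assumes S: "poset_on (car S) (le S)" and T: "poset_on (car T) (le T)"
  shows "poset_on (car S \<times> car T) (prod_le le S T)"
proof
  fix p assume "p \<in> car S \<times> car T"
  then show "prod_le le S T p p"
    using poset_on.refl[OF S] poset_on.refl[OF T] by (auto simp: prod_le_def)
next
  fix p q assume "p \<in> car S \<times> car T" "q \<in> car S \<times> car T"
    and "prod_le le S T p q" "prod_le le S T q p"
  then show "p = q"
    using poset_on.antisym[OF S] poset_on.antisym[OF T] by (auto simp: prod_le_def prod_eq_iff)
next
  fix p q r assume "p \<in> car S \<times> car T" "q \<in> car S \<times> car T" "r \<in> car S \<times> car T"
    and "prod_le le S T p q" "prod_le le S T q r"
  then show "prod_le le S T p r"
    using poset_on.trans[OF S] poset_on.trans[OF T] unfolding prod_le_def mem_Times_iff by blast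
qed

lemma locally_finite_poset_imp_poset_on: "locally_finite_poset A le \<Longrightarrow> poset_on A le"
  unfolding locally_finite_poset_def poset_on_def by blast

context poset_on
begin

lemma finite_has_minimal:
  assumes "finite B" "B \<subseteq> A" "B \<noteq> {}"
  shows "\<exists>m\<in>B. \<forall>b\<in>B. b \<sqsubseteq> m \<longrightarrow> b = m"
proof -
  define below where "below m = {b\<in>B. b \<sqsubseteq> m}" for m
  obtain m where m: "m \<in> B" and least: "\<And>b. b \<in> B \<Longrightarrow> card (below m) \<le> card (below b)"
    using ex_has_least_nat[of "\<lambda>m. m \<in> B" _ "\<lambda>m. card (below m)"] \<open>B \<noteq> {}\<close> by blast
  have "b = m" if "b \<in> B" "b \<sqsubseteq> m" for b
  proof (rule ccontr)
    assume "b \<noteq> m"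
    have "below b \<subset> below m"
    proof
      show "below b \<subseteq> below m"
        using that m assms(2) trans unfolding below_def by blast
      show "below b \<noteq> below m"
        using that m \<open>b \<noteq> m\<close> assms(2) refl antisym unfolding below_def by blast
    qed
    then have "card (below b) < card (below m)"
      using assms(1) by (intro psubset_card_mono) (auto simp: below_def)
    then show False using least[OF \<open>b \<in> B\<close>] by simp
  qed
  then show ?thesis using m by blast
qed

lemma finite_has_maximal:
  assumes "finite B" "B \<subseteq> A" "B \<noteq> {}"
  shows "\<exists>m\<in>B. \<forall>b\<in>B. m \<sqsubseteq> b \<longrightarrow> b = m"
  using poset_on.finite_has_minimal[OF poset_on_dual[OF poset_on_axioms] assms] .

lemma zeta_surj:
  fixes b :: "'a \<Rightarrow> 'k::ab_group_add"
  assumes "finite B" "B \<subseteq> A"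
  shows "\<exists>q. \<forall>w\<in>B. zeta (\<sqsubseteq>) B q w = b w"
  using assms
proof (induction B rule: finite_psubset_induct)
  case (psubset B)
  show ?case
  proof (cases "B = {}")
    case False
    then obtain t where t: "t \<in> B" and t_max: "\<And>c. c \<in> B \<Longrightarrow> t \<sqsubseteq> c \<Longrightarrow> c = t"
      using finite_has_maximal[OF psubset.hyps(1) psubset.prems] by blast
    obtain q' where q': "\<forall>w\<in>B - {t}. zeta (\<sqsubseteq>) (B - {t}) q' w = b w"
      using psubset.IH[of "B - {t}"] psubset.prems t by blast
    define q where "q = q'(t := b t - zeta (\<sqsubseteq>) (B - {t}) q' t)"
    have q_off_t: "zeta (\<sqsubseteq>) (B - {t}) q = zeta (\<sqsubseteq>) (B - {t}) q'"
      by (auto simp: zeta_def q_def intro!: sum.cong)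
    have "zeta (\<sqsubseteq>) B q w = b w" if "w \<in> B" for w
    proof (cases "w = t")
      case True
      have "{e\<in>B. e \<sqsubseteq> t} = insert t {e\<in>B - {t}. e \<sqsubseteq> t}"
        using t refl psubset.prems by auto
      then have "zeta (\<sqsubseteq>) B q t = q t + zeta (\<sqsubseteq>) (B - {t}) q t"
        using psubset.hyps(1) by (simp add: zeta_def)
      then show ?thesis
        using True q_off_t by (simp add: q_def)
    next
      case False
      then have "{e\<in>B. e \<sqsubseteq> w} = {e\<in>B - {t}. e \<sqsubseteq> w}"
        using t_max that by auto
      then have "zeta (\<sqsubseteq>) B q w = zeta (\<sqsubseteq>) (B - {t}) q w"
        by (simp add: zeta_def)
      then show ?thesis
        using False that q' q_off_t by simp
    qed
    then show ?thesis by blast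
  qed (simp add: zeta_def)
qed

lemma zeta_eq_0_imp_eq_0:
  fixes F :: "'a \<Rightarrow> 'k::comm_monoid_add"
  assumes "finite B" "B \<subseteq> A" and zero: "\<forall>w\<in>B. zeta (\<sqsubseteq>) B F w = 0"
  shows "\<forall>e\<in>B. F e = 0"
proof (rule ccontr)
  assume "\<not> (\<forall>e\<in>B. F e = 0)"
  then obtain m where m: "m \<in> B" "F m \<noteq> 0" and m_min: "\<And>b. b \<in> B \<Longrightarrow> F b \<noteq> 0 \<Longrightarrow> b \<sqsubseteq> m \<Longrightarrow> b = m"
    using finite_has_minimal[of "{e\<in>B. F e \<noteq> 0}"] assms(1,2) by auto
  have "zeta (\<sqsubseteq>) B F m = (\<Sum>e\<in>{m}. F e)"
    unfolding zeta_def
    by (rule sum.mono_neutral_right) (use assms(1,2) refl m m_min in auto)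
  then show False using zero m by simp
qed

end

lemma zeta_pushforward:
  assumes "finite G"
  shows "zeta r (g ` G) (\<lambda>\<pi>. \<Sum>x\<in>{x\<in>G. g x = \<pi>}. p x) w = (\<Sum>x\<in>{x\<in>G. r (g x) w}. p x)"
proof -
  have "(\<Sum>x\<in>{x\<in>G. r (g x) w}. p x) = (\<Sum>\<pi>\<in>g ` {x\<in>G. r (g x) w}. \<Sum>x\<in>{x\<in>{x\<in>G. r (g x) w}. g x = \<pi>}. p x)"
    using assms by (intro sum.image_gen) simp
  also have "\<dots> = (\<Sum>\<pi>\<in>{\<pi>\<in>g ` G. r \<pi> w}. \<Sum>x\<in>{x\<in>G. g x = \<pi>}. p x)"
    by (rule sum.cong) (auto intro!: arg_cong[where f = "sum p"])
  finally show ?thesis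
    by (simp add: zeta_def)
qed

lemma cop_lin_eq_sum:
  assumes "finite G" "{x. f x \<noteq> 0} \<subseteq> G"
  shows "cop_lin cop S T f \<pi> = (\<Sum>x\<in>{x\<in>G. cop S T x = \<pi>}. f x)"
  unfolding cop_lin_def by (rule sum.mono_neutral_left) (use assms in auto)

text \<open>A \<^const>\<open>poset_hopf_monoid\<close> without the species maps and the orders, which the
  argument does not use.\<close>

locale set_hopf_monoid =
  fixes car :: "'e set \<Rightarrow> 'h set" and one :: 'h
    and mul :: "'e set \<Rightarrow> 'e set \<Rightarrow> 'h \<Rightarrow> 'h \<Rightarrow> 'h"
    and cop :: "'e set \<Rightarrow> 'e set \<Rightarrow> 'h \<Rightarrow> 'h \<times> 'h"
  assumes car_empty: "car {} = {one}"
    and mul_car: "finite S \<Longrightarrow> finite T \<Longrightarrow> S \<inter> T = {} \<Longrightarrow> y \<in> car S \<Longrightarrow> z \<in> car T \<Longrightarrow>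
      mul S T y z \<in> car (S \<union> T)"
    and cop_car: "finite S \<Longrightarrow> finite T \<Longrightarrow> S \<inter> T = {} \<Longrightarrow> x \<in> car (S \<union> T) \<Longrightarrow>
      cop S T x \<in> car S \<times> car T"
    and mul_assoc: "finite R \<Longrightarrow> finite S \<Longrightarrow> finite T \<Longrightarrow> R \<inter> S = {} \<Longrightarrow> R \<inter> T = {} \<Longrightarrow> S \<inter> T = {} \<Longrightarrow>
      x \<in> car R \<Longrightarrow> y \<in> car S \<Longrightarrow> z \<in> car T \<Longrightarrow>
      mul (R \<union> S) T (mul R S x y) z = mul R (S \<union> T) x (mul S T y z)"
    and mul_one: "finite S \<Longrightarrow> x \<in> car S \<Longrightarrow> mul {} S one x = x \<and> mul S {} x one = x"
    and cop_coassoc: "finite R \<Longrightarrow> finite S \<Longrightarrow> finite T \<Longrightarrow> R \<inter> S = {} \<Longrightarrow> R \<inter> T = {} \<Longrightarrow> S \<inter> T = {} \<Longrightarrow>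
      x \<in> car (R \<union> S \<union> T) \<Longrightarrow>
      (cop R S (fst (cop (R \<union> S) T x)), snd (cop (R \<union> S) T x))
        = ((fst (cop R (S \<union> T) x), fst (cop S T (snd (cop R (S \<union> T) x)))),
           snd (cop S T (snd (cop R (S \<union> T) x))))"
    and cop_counit: "finite S \<Longrightarrow> x \<in> car S \<Longrightarrow> cop {} S x = (one, x) \<and> cop S {} x = (x, one)"
    and cop_mul: "finite S1 \<Longrightarrow> finite S2 \<Longrightarrow> finite T1 \<Longrightarrow> finite T2 \<Longrightarrow>
      S1 \<inter> S2 = {} \<Longrightarrow> T1 \<inter> T2 = {} \<Longrightarrow> S1 \<union> S2 = T1 \<union> T2 \<Longrightarrow> x \<in> car S1 \<Longrightarrow> y \<in> car S2 \<Longrightarrow>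
      cop T1 T2 (mul S1 S2 x y)
        = (mul (S1 \<inter> T1) (S2 \<inter> T1) (fst (cop (S1 \<inter> T1) (S1 \<inter> T2) x)) (fst (cop (S2 \<inter> T1) (S2 \<inter> T2) y)),
           mul (S1 \<inter> T2) (S2 \<inter> T2) (snd (cop (S1 \<inter> T1) (S1 \<inter> T2) x)) (snd (cop (S2 \<inter> T1) (S2 \<inter> T2) y)))"

lemma poset_hopf_monoid_imp_set_hopf_monoid:
  assumes "poset_hopf_monoid car le rel one mul cop"
  shows "set_hopf_monoid car one mul cop"
proof
  show "car {} = {one}"
    using assms by (simp add: poset_hopf_monoid_def poset_species_def)
qed (use assms[unfolded poset_hopf_monoid_def] in meson)+

lemma poset_hopf_monoid_poset_on:
  assumes "poset_hopf_monoid car le rel one mul cop" "finite J"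
  shows "poset_on (car J) (le J)"
proof -
  have "poset_species car le rel one"
    using assms(1) unfolding poset_hopf_monoid_def by (rule conjunct1)
  then have "locally_finite_poset (car J) (le J)"
    using assms(2) by (simp add: poset_species_def)
  then show ?thesis
    by (rule locally_finite_poset_imp_poset_on)
qed

context set_hopf_monoid
begin

lemma cop_coassoc_components:
  assumes "finite R" "finite S" "finite T" "R \<inter> S = {}" "R \<inter> T = {}" "S \<inter> T = {}" "x \<in> car (R \<union> S \<union> T)"
  shows "fst (cop R S (fst (cop (R \<union> S) T x))) = fst (cop R (S \<union> T) x)"
    and "snd (cop R S (fst (cop (R \<union> S) T x))) = fst (cop S T (snd (cop R (S \<union> T) x)))"
    and "snd (cop (R \<union> S) T x) = snd (cop S T (snd (cop R (S \<union> T) x)))"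
  using cop_coassoc[OF assms] by (simp_all add: prod_eq_iff)

text \<open>\<open>piece L J R x\<close> is the middle component of the threefold coproduct
  \<open>\<Delta>\<^sub>L\<^sub>,\<^sub>J\<^sub>,\<^sub>R x\<close>. Products of pieces of \<open>x\<close> form a finite set that contains \<open>x\<close> and is
  stable under every \<open>m\<^sub>S\<^sub>,\<^sub>T \<circ> \<Delta>\<^sub>S\<^sub>,\<^sub>T\<close>, by coassociativity and compatibility.\<close>

definition piece :: "'e set \<Rightarrow> 'e set \<Rightarrow> 'e set \<Rightarrow> 'h \<Rightarrow> 'h" where
  "piece L J R x = fst (cop J R (snd (cop L (J \<union> R) x)))"

inductive from_pieces :: "'e set \<Rightarrow> 'h \<Rightarrow> 'e set \<Rightarrow> 'h \<Rightarrow> bool" for I x where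
  piece: "L \<inter> J = {} \<Longrightarrow> L \<inter> R = {} \<Longrightarrow> J \<inter> R = {} \<Longrightarrow> L \<union> J \<union> R = I \<Longrightarrow>
    from_pieces I x J (piece L J R x)"
| product: "from_pieces I x A u \<Longrightarrow> from_pieces I x B v \<Longrightarrow> A \<inter> B = {} \<Longrightarrow> A \<noteq> {} \<Longrightarrow> B \<noteq> {} \<Longrightarrow>
    from_pieces I x (A \<union> B) (mul A B u v)"

lemma from_pieces_car:
  assumes I: "finite I" "x \<in> car I" and "from_pieces I x J u"
  shows "J \<subseteq> I" "u \<in> car J"
proof -
  have "J \<subseteq> I \<and> u \<in> car J"
    using assms(3)
  proof induction
    case (piece L J R)
    have fin: "finite L" "finite J" "finite R"
      using piece.hyps(4) I(1) by (auto intro: finite_subset)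
    have "x \<in> car (L \<union> (J \<union> R))"
      using I(2) piece.hyps(4) by (simp add: Un_assoc)
    then have "snd (cop L (J \<union> R) x) \<in> car (J \<union> R)"
      using cop_car[of L "J \<union> R" x] fin piece.hyps by (simp add: Int_Un_distrib mem_Times_iff)
    then show ?case
      using cop_car[of J R] fin piece.hyps unfolding piece_def by fastforce
  next
    case (product A u B v)
    then show ?case
      using mul_car[of A B u v] I(1) by (auto intro: finite_subset)
  qed
  then show "J \<subseteq> I" "u \<in> car J" by auto
qed

lemma from_pieces_self:
  assumes "finite I" "x \<in> car I"
  shows "from_pieces I x I x"
proof -
  have "from_pieces I x I (piece {} I {} x)"
    by (rule from_pieces.piece) auto
  then show ?thesis
    using cop_counit[OF assms] by (simp add: piece_def)
qed

lemma from_pieces_mul: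
  assumes I: "finite I" "x \<in> car I"
    and "from_pieces I x A u" "from_pieces I x B v" "A \<inter> B = {}"
  shows "from_pieces I x (A \<union> B) (mul A B u v)"
proof -
  have A: "finite A" "u \<in> car A" and B: "finite B" "v \<in> car B"
    using from_pieces_car[OF I] assms(3,4) I(1) by (auto intro: finite_subset)
  consider "A = {}" | "B = {}" | "A \<noteq> {}" "B \<noteq> {}" by blast
  then show ?thesis
  proof cases
    case 1
    then show ?thesis using A car_empty mul_one[OF B] assms(4) by simp
  next
    case 2
    then show ?thesis using B car_empty mul_one[OF A] assms(3) by simp
  qed (use assms from_pieces.product in blast)
qed

lemma cop_piece:
  assumes "finite (L \<union> A \<union> B \<union> R)" "x \<in> car (L \<union> A \<union> B \<union> R)"
    and "L \<inter> A = {}" "L \<inter> B = {}" "L \<inter> R = {}" "A \<inter> B = {}" "A \<inter> R = {}" "B \<inter> R = {}"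
  shows "cop A B (piece L (A \<union> B) R x) = (piece L A (B \<union> R) x, piece (L \<union> A) B R x)"
proof -
  have fin: "finite L" "finite A" "finite B" "finite R"
    using assms(1) by auto
  define w where "w = snd (cop L (A \<union> B \<union> R) x)"
  have x: "x \<in> car (L \<union> A \<union> (B \<union> R))"
    using assms(2) by (simp add: Un_assoc)
  then have "cop L (A \<union> (B \<union> R)) x \<in> car L \<times> car (A \<union> (B \<union> R))"
    using cop_car[of L "A \<union> (B \<union> R)" x] fin assms(3-8) by (simp add: Int_Un_distrib Un_assoc)
  then have w: "w \<in> car (A \<union> B \<union> R)"
    by (auto simp: w_def Un_assoc)
  have "fst (cop A B (fst (cop (A \<union> B) R w))) = fst (cop A (B \<union> R) w)"
    and "snd (cop A B (fst (cop (A \<union> B) R w))) = fst (cop B R (snd (cop A (B \<union> R) w)))"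
    using cop_coassoc_components(1,2)[OF fin(2-4) assms(6-8) w] by auto
  moreover have "snd (cop (L \<union> A) (B \<union> R) x) = snd (cop A (B \<union> R) w)"
    using cop_coassoc_components(3)[OF fin(1,2) _ assms(3) _ _ x] fin assms(3-8)
    by (simp add: w_def Int_Un_distrib Un_assoc)
  ultimately show ?thesis
    by (simp add: piece_def w_def Un_assoc prod_eq_iff)
qed

lemma from_pieces_cop:
  assumes I: "finite I" "x \<in> car I"
    and "from_pieces I x J u" "J = A \<union> B" "A \<inter> B = {}"
  shows "from_pieces I x A (fst (cop A B u)) \<and> from_pieces I x B (snd (cop A B u))"
  using assms(3-5)
proof (induction arbitrary: A B)
  case (piece L J R)
  have "L \<union> A \<union> B \<union> R = I"
    using piece by blast
  then have "cop A B (piece L (A \<union> B) R x) = (piece L A (B \<union> R) x, piece (L \<union> A) B R x)"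
    using cop_piece[of L A B R x] I piece by (simp add: Int_Un_distrib Int_Un_distrib2)
  moreover have "from_pieces I x A (piece L A (B \<union> R) x)" "from_pieces I x B (piece (L \<union> A) B R x)"
    using piece by (auto intro!: from_pieces.piece)
  ultimately show ?case
    using piece.prems by simp
next
  case (product A' u B' v)
  have A': "A' \<subseteq> I" "u \<in> car A'" and B': "B' \<subseteq> I" "v \<in> car B'"
    using from_pieces_car[OF I] product.hyps by auto
  have fin: "finite A'" "finite B'" "finite A" "finite B"
    using A' B' product.prems I(1) by (auto intro: finite_subset)
  have cop_uv: "cop A B (mul A' B' u v)
      = (mul (A' \<inter> A) (B' \<inter> A) (fst (cop (A' \<inter> A) (A' \<inter> B) u)) (fst (cop (B' \<inter> A) (B' \<inter> B) v)),
         mul (A' \<inter> B) (B' \<inter> B) (snd (cop (A' \<inter> A) (A' \<inter> B) u)) (snd (cop (B' \<inter> A) (B' \<inter> B) v)))"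
    by (rule cop_mul[OF fin product.hyps(3) product.prems(2,1) A'(2) B'(2)])
  have u: "from_pieces I x (A' \<inter> A) (fst (cop (A' \<inter> A) (A' \<inter> B) u))"
    "from_pieces I x (A' \<inter> B) (snd (cop (A' \<inter> A) (A' \<inter> B) u))"
    using product.IH(1)[of "A' \<inter> A" "A' \<inter> B"] product.prems by auto
  have v: "from_pieces I x (B' \<inter> A) (fst (cop (B' \<inter> A) (B' \<inter> B) v))"
    "from_pieces I x (B' \<inter> B) (snd (cop (B' \<inter> A) (B' \<inter> B) v))"
    using product.IH(2)[of "B' \<inter> A" "B' \<inter> B"] product.prems by auto
  have "A' \<inter> A \<inter> (B' \<inter> A) = {}" "A' \<inter> B \<inter> (B' \<inter> B) = {}"
    using product.hyps(3) by auto
  note products = from_pieces_mul[OF I u(1) v(1) this(1)] from_pieces_mul[OF I u(2) v(2) this(2)]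
  have "A' \<inter> A \<union> B' \<inter> A = A" "A' \<inter> B \<union> B' \<inter> B = B"
    using product.prems by auto
  with products show ?case
    unfolding cop_uv by simp
qed

lemma finite_from_pieces:
  assumes "finite I" "J \<subseteq> I"
  shows "finite {u. from_pieces I x J u}"
proof -
  have "finite J"
    using assms finite_subset by blast
  then show ?thesis
    using assms(2)
  proof (induction J rule: finite_psubset_induct)
    case (psubset J)
    let ?pieces = "(\<lambda>(L, R). piece L J R x) ` (Pow I \<times> Pow I)"
    let ?products = "\<Union>A\<in>{A. A \<subset> J \<and> A \<noteq> {}}.
      (\<lambda>(u, v). mul A (J - A) u v) ` ({u. from_pieces I x A u} \<times> {v. from_pieces I x (J - A) v})"
    have "{u. from_pieces I x J u} \<subseteq> ?pieces \<union> ?products"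
    proof
      fix u assume "u \<in> {u. from_pieces I x J u}"
      then have "from_pieces I x J u"
        by simp
      then show "u \<in> ?pieces \<union> ?products"
      proof cases
        case (piece L R)
        then show ?thesis
          by (intro UnI1 image_eqI[where x = "(L, R)"]) auto
      next
        case (product A u' B v')
        have "A \<subset> J" "A \<noteq> {}" "B = J - A"
          using product(1,5-7) by blast+
        then show ?thesis
          using product(2-4) by (intro UnI2 UN_I[of A] image_eqI[where x = "(u', v')"]) auto
      qed
    qed
    moreover have "finite ?products"
    proof (intro finite_UN_I finite_imageI finite_cartesian_product)
      show "finite {A. A \<subset> J \<and> A \<noteq> {}}"
        by (rule finite_subset[of _ "Pow J"]) (use psubset.hyps(1) in auto)
      fix A assume "A \<in> {A. A \<subset> J \<and> A \<noteq> {}}"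
      then show "finite {u. from_pieces I x A u}" "finite {v. from_pieces I x (J - A) v}"
        using psubset.IH[of A] psubset.IH[of "J - A"] psubset.prems by auto
    qed
    ultimately show ?case
      using assms(1) by (auto intro: finite_subset)
  qed
qed

lemma finite_superset_closed_under_cop_mul:
  assumes "finite I" "finite X" "X \<subseteq> car I"
  obtains G where "finite G" "X \<subseteq> G" "G \<subseteq> car I"
    and "\<And>u S T. u \<in> G \<Longrightarrow> S \<union> T = I \<Longrightarrow> S \<inter> T = {} \<Longrightarrow>
           mul S T (fst (cop S T u)) (snd (cop S T u)) \<in> G"
proof
  let ?G = "\<Union>x\<in>X. {u. from_pieces I x I u}"
  show "finite ?G"
    using assms(1,2) finite_from_pieces by blast
  show "X \<subseteq> ?G"
    using assms from_pieces_self by blast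
  show "?G \<subseteq> car I"
    using assms from_pieces_car(2) by blast
  show "mul S T (fst (cop S T u)) (snd (cop S T u)) \<in> ?G"
    if u: "u \<in> ?G" and ST: "S \<union> T = I" "S \<inter> T = {}" for u S T
  proof -
    obtain x where x: "x \<in> X" "from_pieces I x I u"
      using u by blast
    then have x_car: "x \<in> car I"
      using assms(3) by blast
    have "from_pieces I x S (fst (cop S T u)) \<and> from_pieces I x T (snd (cop S T u))"
      using from_pieces_cop[OF assms(1) x_car x(2) ST(1)[symmetric] ST(2)] .
    then have "from_pieces I x (S \<union> T) (mul S T (fst (cop S T u)) (snd (cop S T u)))"
      using from_pieces_mul[OF assms(1) x_car _ _ ST(2)] by blast
    then show ?thesis
      using x(1) ST(1) by auto
  qed
qed

definition proper_products :: "'e set \<Rightarrow> 'h set" where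
  "proper_products I = {mul S T y z | S T y z. S \<union> T = I \<and> S \<inter> T = {} \<and> S \<noteq> {} \<and> T \<noteq> {} \<and>
                                                y \<in> car S \<and> z \<in> car T}"

lemma decomp_iff:
  "f \<in> decomp car mul I \<longleftrightarrow> finite {x. f x \<noteq> 0} \<and> {x. f x \<noteq> 0} \<subseteq> proper_products I"
proof -
  have sum_bvec: "(\<Sum>a\<in>A. c a * bvec a w) = (if w \<in> A then c w else 0)" if "finite A" for A w and c :: "'h \<Rightarrow> 'a"
    using that by (simp add: bvec_def if_distrib cong: if_cong)
  show ?thesis
  proof
    assume "f \<in> decomp car mul I"
    then obtain A c where A: "finite A" "A \<subseteq> proper_products I"
      and f: "f = (\<lambda>w. \<Sum>a\<in>A. c a * bvec a w)"
      unfolding decomp_def proper_products_def by blast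
    then have "{x. f x \<noteq> 0} \<subseteq> A"
      using sum_bvec by auto
    then show "finite {x. f x \<noteq> 0} \<and> {x. f x \<noteq> 0} \<subseteq> proper_products I"
      using A by (auto intro: finite_subset)
  next
    assume "finite {x. f x \<noteq> 0} \<and> {x. f x \<noteq> 0} \<subseteq> proper_products I"
    moreover have "f = (\<lambda>w. \<Sum>a\<in>{x. f x \<noteq> 0}. f a * bvec a w)"
      using calculation sum_bvec by fastforce
    ultimately show "f \<in> decomp car mul I"
      unfolding decomp_def proper_products_def by blast
  qed
qed

end

locale adjoint_set_hopf_monoid = set_hopf_monoid car one mul cop
  for car :: "'e set \<Rightarrow> 'h set" and one mul cop +
  fixes le :: "'e set \<Rightarrow> 'h \<Rightarrow> 'h \<Rightarrow> bool"
  assumes poset: "finite J \<Longrightarrow> poset_on (car J) (le J)"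
    and cop_le_iff_le_mul: "finite S \<Longrightarrow> finite T \<Longrightarrow> S \<inter> T = {} \<Longrightarrow>
      x \<in> car (S \<union> T) \<Longrightarrow> y \<in> car S \<Longrightarrow> z \<in> car T \<Longrightarrow>
      prod_le le S T (cop S T x) (y, z) \<longleftrightarrow> le (S \<union> T) x (mul S T y z)"
begin

lemma prim_inter_decomp_eq_0:
  fixes f :: "'h \<Rightarrow> 'k::comm_ring_1"
  assumes I: "finite I" and "f \<in> prim car cop I" "f \<in> decomp car mul I"
  shows "f = (\<lambda>_. 0)"
proof (rule ccontr)
  assume "f \<noteq> (\<lambda>_. 0)"
  define supp where "supp = {x. f x \<noteq> 0}"
  have supp: "finite supp" "supp \<subseteq> proper_products I" "supp \<subseteq> car I" "supp \<noteq> {}"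
    using assms(2,3) \<open>f \<noteq> (\<lambda>_. 0)\<close>
    by (auto simp: decomp_iff prim_def kspace_def supp_def)
  obtain u where u: "u \<in> supp" and u_min: "\<And>x. x \<in> supp \<Longrightarrow> le I x u \<Longrightarrow> x = u"
    using poset_on.finite_has_minimal[OF poset[OF I] supp(1,3,4)] by blast
  obtain S T y z where u_eq: "u = mul S T y z" and ST: "S \<union> T = I" "S \<inter> T = {}" "S \<noteq> {}" "T \<noteq> {}"
    and yz: "y \<in> car S" "z \<in> car T"
    using u supp(2) unfolding proper_products_def by blast
  have fin: "finite S" "finite T"
    using ST(1) I by auto
  have below_u: "prod_le le S T (cop S T x) (y, z) \<longleftrightarrow> le I x u" if "x \<in> supp" for x
    using cop_le_iff_le_mul[OF fin ST(2) _ yz] that supp(3) ST(1) u_eq by auto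
  have "prod_le le S T (cop S T u) (y, z)"
    using below_u[OF u] poset_on.refl[OF poset[OF I]] u supp(3) by blast
  then have "x = u" if "x \<in> supp" "cop S T x = cop S T u" for x
    using below_u[OF that(1)] u_min[OF that(1)] that(2) by simp
  then have "{x. f x \<noteq> 0 \<and> cop S T x = cop S T u} = {u}"
    using u unfolding supp_def by blast
  then have "cop_lin cop S T f (cop S T u) = f u"
    by (simp add: cop_lin_def)
  moreover have "cop_lin cop S T f = (\<lambda>_. 0)"
    using assms(2) ST unfolding prim_def by blast
  ultimately show False
    using u by (simp add: supp_def)
qed

lemma prim_if_zeta_vanishes:
  fixes p :: "'h \<Rightarrow> 'k::comm_monoid_add"
  assumes I: "finite I" and G: "finite G" "G \<subseteq> car I"
    and closed: "\<And>u S T. u \<in> G \<Longrightarrow> S \<union> T = I \<Longrightarrow> S \<inter> T = {} \<Longrightarrow>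
                   mul S T (fst (cop S T u)) (snd (cop S T u)) \<in> G"
    and supp: "{x. p x \<noteq> 0} \<subseteq> G"
    and zero: "\<And>w. w \<in> G \<Longrightarrow> w \<in> proper_products I \<Longrightarrow> zeta (le I) G p w = 0"
  shows "p \<in> prim car cop I"
  unfolding prim_def
proof (intro CollectI conjI allI impI)
  show "p \<in> kspace car I"
    using G supp by (auto simp: kspace_def intro: finite_subset)
  fix S T assume "S \<union> T = I \<and> S \<inter> T = {} \<and> S \<noteq> {} \<and> T \<noteq> {}"
  then have ST: "S \<union> T = I" "S \<inter> T = {}" "S \<noteq> {}" "T \<noteq> {}"
    by auto
  have fin: "finite S" "finite T"
    using ST(1) I by auto
  define F where "F \<pi> = (\<Sum>x\<in>{x\<in>G. cop S T x = \<pi>}. p x)" for \<pi>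
  define P where "P = cop S T ` G"
  have P: "finite P" "P \<subseteq> car S \<times> car T"
    using G cop_car[OF fin ST(2)] ST(1) unfolding P_def by blast+
  have "zeta (prod_le le S T) P F w = 0" if w_P: "w \<in> P" for w
  proof -
    obtain u where u: "u \<in> G" "w = cop S T u"
      using w_P unfolding P_def by blast
    define w0 where "w0 = mul S T (fst w) (snd w)"
    have w: "fst w \<in> car S" "snd w \<in> car T"
      using w_P P(2) by auto
    have "w0 \<in> G"
      using closed[OF u(1) ST(1,2)] unfolding w0_def u(2) .
    have "w0 \<in> proper_products I"
      using w ST unfolding w0_def proper_products_def by blast
    have "zeta (prod_le le S T) P F w = (\<Sum>x\<in>{x\<in>G. prod_le le S T (cop S T x) w}. p x)"
      unfolding P_def F_def using G(1) by (rule zeta_pushforward)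
    also have "\<dots> = zeta (le I) G p w0"
      \<comment> \<open>the adjunction: \<open>\<Delta>\<^sub>S\<^sub>,\<^sub>T x \<le> w \<longleftrightarrow> x \<le> m\<^sub>S\<^sub>,\<^sub>T w\<close>\<close>
      unfolding zeta_def w0_def
      using cop_le_iff_le_mul[OF fin ST(2) _ w] G(2) ST(1) by (intro sum.cong) auto
    also have "\<dots> = 0"
      using zero \<open>w0 \<in> G\<close> \<open>w0 \<in> proper_products I\<close> .
    finally show ?thesis .
  qed
  then have F_on_P: "\<forall>\<pi>\<in>P. F \<pi> = 0"
    using poset_on.zeta_eq_0_imp_eq_0[OF poset_on_prod_le[OF poset[OF fin(1)] poset[OF fin(2)]] P]
    by blast
  have "F \<pi> = 0" for \<pi>
  proof (cases "\<pi> \<in> P")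
    case False
    then show ?thesis
      unfolding F_def P_def by (auto intro: sum.neutral)
  qed (use F_on_P in blast)
  then show "cop_lin cop S T p = (\<lambda>_. 0)"
    using cop_lin_eq_sum[OF G(1) supp, where cop = cop and S = S and T = T]
    unfolding F_def by (simp add: fun_eq_iff)
qed

lemma kspace_eq_prim_plus_decomp:
  fixes f :: "'h \<Rightarrow> 'k::comm_ring_1"
  assumes I: "finite I" and f: "f \<in> kspace car I"
  shows "\<exists>p q. p \<in> prim car cop I \<and> q \<in> decomp car mul I \<and> f = (\<lambda>x. p x + q x)"
proof -
  have supp_f: "finite {x. f x \<noteq> 0}" "{x. f x \<noteq> 0} \<subseteq> car I"
    using f by (auto simp: kspace_def)
  obtain G where G: "finite G" "{x. f x \<noteq> 0} \<subseteq> G" "G \<subseteq> car I"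
    and closed: "\<And>u S T. u \<in> G \<Longrightarrow> S \<union> T = I \<Longrightarrow> S \<inter> T = {} \<Longrightarrow>
                   mul S T (fst (cop S T u)) (snd (cop S T u)) \<in> G"
    using finite_superset_closed_under_cop_mul[OF I supp_f] by blast
  define E where "E = G \<inter> proper_products I"
  have E: "finite E" "E \<subseteq> G"
    using G(1) by (auto simp: E_def)
  obtain c where c: "\<And>w. w \<in> E \<Longrightarrow> zeta (le I) E c w = zeta (le I) G f w"
    using poset_on.zeta_surj[OF poset[OF I] E(1)] E(2) G(3) by force
  define q where "q w = (if w \<in> E then c w else 0)" for w
  define p where "p w = f w - q w" for w
  have "q \<in> decomp car mul I"
    unfolding decomp_iff using E(1) by (auto simp: q_def E_def intro: finite_subset)
  moreover have "p \<in> prim car cop I"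
  proof (rule prim_if_zeta_vanishes[OF I G(1,3) closed])
    show "{x. p x \<noteq> 0} \<subseteq> G"
      using G(2) E(2) by (auto simp: p_def q_def split: if_splits)
    fix w assume "w \<in> G" "w \<in> proper_products I"
    then have "w \<in> E"
      by (simp add: E_def)
    have "zeta (le I) G q w = zeta (le I) E c w"
      unfolding zeta_def q_def using G(1) E(2)
      by (intro sum.mono_neutral_cong_right) auto
    then show "zeta (le I) G p w = 0"
      using c[OF \<open>w \<in> E\<close>] by (simp add: zeta_def p_def sum_subtractf)
  qed
  moreover have "f = (\<lambda>x. p x + q x)"
    by (simp add: p_def)
  ultimately show ?thesis
    by blast
qed

lemma prim_inter_decomp:
  assumes "finite I"
  shows "prim car cop I \<inter> decomp car mul I = {(\<lambda>_. 0 :: 'k::comm_ring_1)}"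
proof (rule equalityI)
  show "prim car cop I \<inter> decomp car mul I \<subseteq> {(\<lambda>_. 0 :: 'k)}"
    using prim_inter_decomp_eq_0[OF assms] by blast
  have "(\<lambda>_. 0 :: 'k) \<in> prim car cop I"
    by (simp add: prim_def kspace_def cop_lin_def)
  moreover have "(\<lambda>_. 0 :: 'k) \<in> decomp car mul I"
    by (simp add: decomp_iff)
  ultimately show "{(\<lambda>_. 0 :: 'k)} \<subseteq> prim car cop I \<inter> decomp car mul I"
    by blast
qed

theorem prim_decomp_direct_sum:
  assumes "finite I"
  shows "(\<forall>f \<in> kspace car I. \<exists>p q. p \<in> (prim car cop I :: ('h \<Rightarrow> 'k::comm_ring_1) set)
                                 \<and> q \<in> decomp car mul I \<and> f = (\<lambda>x. p x + q x))
       \<and> prim car cop I \<inter> decomp car mul I = {(\<lambda>_. 0 :: 'k)}"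
  by (intro conjI ballI prim_inter_decomp[OF assms]) (erule kspace_eq_prim_plus_decomp[OF assms])

end

lemma self_adjoint_poset_hopf_monoidE:
  assumes H: "poset_hopf_monoid car le rel one mul cop" and "self_adjoint car le mul cop"
  obtains "adjoint_set_hopf_monoid car one mul cop le"
    | "adjoint_set_hopf_monoid car one mul cop (\<lambda>J a b. le J b a)"
proof -
  note intro = adjoint_set_hopf_monoid.intro[OF poset_hopf_monoid_imp_set_hopf_monoid[OF H]
                                               adjoint_set_hopf_monoid_axioms.intro]
  have poset: "poset_on (car J) (le J)" if "finite J" for J
    using poset_hopf_monoid_poset_on[OF H that] .
  show thesis
    using assms(2) unfolding self_adjoint_def
  proof (elim disjE)
    assume adj: "\<forall>S T. finite S \<and> finite T \<and> S \<inter> T = {} \<longrightarrow>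
      (\<forall>x\<in>car (S \<union> T). \<forall>y\<in>car S. \<forall>z\<in>car T.
         prod_le le S T (cop S T x) (y, z) \<longleftrightarrow> le (S \<union> T) x (mul S T y z))"
    have "adjoint_set_hopf_monoid car one mul cop le"
    proof (rule intro)
      show "prod_le le S T (cop S T x) (y, z) \<longleftrightarrow> le (S \<union> T) x (mul S T y z)"
        if "finite S" "finite T" "S \<inter> T = {}" "x \<in> car (S \<union> T)" "y \<in> car S" "z \<in> car T"
        for S T x y z
        using adj that by blast
    qed (rule poset)
    then show thesis by (rule that(1))
  next
    assume adj: "\<forall>S T. finite S \<and> finite T \<and> S \<inter> T = {} \<longrightarrow>
      (\<forall>x\<in>car (S \<union> T). \<forall>y\<in>car S. \<forall>z\<in>car T.
         le (S \<union> T) (mul S T y z) x \<longleftrightarrow> prod_le le S T (y, z) (cop S T x))"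
    have "adjoint_set_hopf_monoid car one mul cop (\<lambda>J a b. le J b a)"
    proof (rule intro)
      show "prod_le (\<lambda>J a b. le J b a) S T (cop S T x) (y, z) \<longleftrightarrow> le (S \<union> T) (mul S T y z) x"
        if "finite S" "finite T" "S \<inter> T = {}" "x \<in> car (S \<union> T)" "y \<in> car S" "z \<in> car T"
        for S T x y z
        using adj that unfolding prod_le_def by simp
    qed (rule poset_on_dual[OF poset])
    then show thesis by (rule that(2))
  qed
qed

theorem mainTheorem9:
  fixes car :: "'e set \<Rightarrow> 'h set"
    and le :: "'e set \<Rightarrow> 'h \<Rightarrow> 'h \<Rightarrow> bool"
    and rel :: "('e \<Rightarrow> 'e) \<Rightarrow> 'e set \<Rightarrow> 'h \<Rightarrow> 'h"
    and one :: 'h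
    and mul :: "'e set \<Rightarrow> 'e set \<Rightarrow> 'h \<Rightarrow> 'h \<Rightarrow> 'h"
    and cop :: "'e set \<Rightarrow> 'e set \<Rightarrow> 'h \<Rightarrow> 'h \<times> 'h"
    and I :: "'e set"
  assumes "poset_hopf_monoid car le rel one mul cop"
    and "self_adjoint car le mul cop"
    and "finite I"
  shows "(\<forall>f \<in> kspace car I. \<exists>p q. p \<in> (prim car cop I :: ('h \<Rightarrow> 'k::field_char_0) set)
                                 \<and> q \<in> decomp car mul I \<and> f = (\<lambda>x. p x + q x))
       \<and> prim car cop I \<inter> decomp car mul I = {(\<lambda>_. 0 :: 'k)}"
  using assms(1,2)
  by (rule self_adjoint_poset_hopf_monoidE)
    (erule adjoint_set_hopf_monoid.prim_decomp_direct_sum[OF _ assms(3)])+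

end
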